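(* Let $g$ be a balanced $n$-variable Boolean function, $b\in\mathbb{F}_2$, let $g_b$ be the $(n+1)$-variable function $$g_b(X_{n+1},X_n,\ldots,X_1)=(1\oplus X_{n+1})\,g(X_n,\ldots,X_1)\oplus X_{n+1}\bigl(b\oplus g(1\oplus X_n,\ldots,1\oplus X_1)\bigr),$$ and let $G_b=g_b\diamond g$ (an $n(n+1)$-variable function). Then $$\frac{H_\infty(G_b)}{\mathrm{Inf}(G_b)}=\frac{\min_{i\in\{0,\ldots,n+1\},\ a_i>0}\bigl(-\log a_i+i\,H_\infty(g)\bigr)}{\mathrm{Inf}(g)\bigl(\mathrm{Inf}(g)+\epsilon_b(g)\bigr)},$$ where $a_i=\max_{\mathbf{w}\in\mathbb{F}_2^{n+1},\ \mathrm{wt}(\mathbf{w})=i}W_{g_b}^2(\mathbf{w})$ and $\epsilon_b(g)=\sum_{\bm{\alpha}\in\mathbb{F}_2^n,\ \mathrm{wt}(\bm{\alpha})\not\equiv b\pmod 2}W_g^2(\bm{\alpha})$. Moreover, if there is an integer $t$ with $0\le t<n$ and $t\equiv b\pmod 2$ such that $g$ is plateaued and $t$-resilient but not $(t+1)$-resilient, then $$\frac{H_\infty(G_b)}{\mathrm{Inf}(G_b)}=\frac{H_\infty(g)}{\mathrm{Inf}(g)}\cdot\frac{t+3}{\mathrm{Inf}(g)+\epsilon_b(g)}.$$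
   Context: Boolean functions are maps $\mathbb{F}_2^n\to\mathbb{F}_2$; balanced means value $1$ on exactly $2^{n-1}$ inputs. Walsh transform: $W_f(\bm{\alpha})=2^{-n}\sum_{\mathbf{x}}(-1)^{f(\mathbf{x})\oplus\langle\mathbf{x},\bm{\alpha}\rangle}$, $\langle\mathbf{x},\bm{\alpha}\rangle=\bigoplus_ix_i\alpha_i$. Logarithms base 2. Min-entropy: $H_\infty(f)=\min_{\bm{\alpha}:W_f^2(\bm{\alpha})\ne0}\log(1/W_f^2(\bm{\alpha}))$. Influence: $\mathrm{Inf}(f)=\sum_{i=1}^n\Pr_{\mathbf{x}}[f(\mathbf{x})\ne f(\mathbf{x}\oplus\mathbf{e}_i)]=\sum_{\bm{\alpha}}\mathrm{wt}(\bm{\alpha})W_f^2(\bm{\alpha})$. Disjoint composition: for $f$ on $k$ variables and $h$ on $l$ variables, $(f\diamond h)(\mathbf{x})=f(h(\mathbf{x}^{(1)}),\ldots,h(\mathbf{x}^{(k)}))$ with $\mathbf{x}^{(i)}=(x_{(i-1)l+1},\ldots,x_{il})$. A function $f$ is $t$-resilient if $W_f(\bm{\alpha})=0$ for all $\bm{\alpha}$ with $\mathrm{wt}(\bm{\alpha})\le t$; $f$ is plateaued if there is $c$ such that $W_f(\bm{\alpha})\in\{0,c,-c\}$ for all $\bm{\alpha}$. *)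

theory Defs
  imports Complex_Main
begin

text \<open>Vectors of \<open>F_2^n\<close> are Boolean lists of length n; a list x = [x_1,...,x_n]
  (x ! i is the variable x_{i+1}). A Boolean function on n variables is a map
  \<open>bool list \<Rightarrow> bool\<close>, only its values on lists of length n matter.\<close>

definition vecs :: "nat \<Rightarrow> bool list set" where
  "vecs n = {x. length x = n}"

definition wt :: "bool list \<Rightarrow> nat" where
  "wt x = count_list x True"

definition inner :: "bool list \<Rightarrow> bool list \<Rightarrow> bool" where
  "inner x a = odd (length (filter (\<lambda>(u,v). u \<and> v) (zip x a)))"

definition sgn01 :: "bool \<Rightarrow> real" where
  "sgn01 b = (if b then -1 else 1)"

definition balanced :: "nat \<Rightarrow> (bool list \<Rightarrow> bool) \<Rightarrow> bool" where
  "balanced n f \<longleftrightarrow> 2 * card {x \<in> vecs n. f x} = 2 ^ n"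

definition walsh :: "nat \<Rightarrow> (bool list \<Rightarrow> bool) \<Rightarrow> bool list \<Rightarrow> real" where
  "walsh n f a = (\<Sum>x\<in>vecs n. sgn01 (f x \<noteq> inner x a)) / 2 ^ n"

definition min_entropy :: "nat \<Rightarrow> (bool list \<Rightarrow> bool) \<Rightarrow> real" where
  "min_entropy n f = Min {log 2 (1 / (walsh n f a)\<^sup>2) | a. a \<in> vecs n \<and> (walsh n f a)\<^sup>2 \<noteq> 0}"

text \<open>flip x i = x \<oplus> e_{i+1}\<close>
definition flip :: "bool list \<Rightarrow> nat \<Rightarrow> bool list" where
  "flip x i = x[i := \<not> x ! i]"

definition influence :: "nat \<Rightarrow> (bool list \<Rightarrow> bool) \<Rightarrow> real" where
  "influence n f = (\<Sum>i<n. real (card {x \<in> vecs n. f x \<noteq> f (flip x i)}) / 2 ^ n)"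

text \<open>Disjoint composition (f \<diamond> h) for f on k variables and h on l variables;
  the i-th block x^(i) consists of positions (i-1)l+1 .. il.\<close>
definition dcomp :: "nat \<Rightarrow> nat \<Rightarrow> (bool list \<Rightarrow> bool) \<Rightarrow> (bool list \<Rightarrow> bool) \<Rightarrow> bool list \<Rightarrow> bool" where
  "dcomp k l f h x = f (map (\<lambda>i. h (take l (drop (i * l) x))) [0..<k])"

definition resilient :: "nat \<Rightarrow> (bool list \<Rightarrow> bool) \<Rightarrow> nat \<Rightarrow> bool" where
  "resilient n f t \<longleftrightarrow> (\<forall>a\<in>vecs n. wt a \<le> t \<longrightarrow> walsh n f a = 0)"

definition plateaued :: "nat \<Rightarrow> (bool list \<Rightarrow> bool) \<Rightarrow> bool" where
  "plateaued n f \<longleftrightarrow> (\<exists>c. \<forall>a\<in>vecs n. walsh n f a \<in> {0, c, -c})"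

text \<open>g_b on n+1 variables [X_1,...,X_n,X_{n+1}]:
  (1 + X_{n+1}) g(X_n..X_1) + X_{n+1} (b + g(1+X_n,...,1+X_1)).\<close>
definition gb :: "nat \<Rightarrow> (bool list \<Rightarrow> bool) \<Rightarrow> bool \<Rightarrow> bool list \<Rightarrow> bool" where
  "gb n g b x = (if x ! n then (b \<noteq> g (map Not (take n x))) else g (take n x))"

definition a_coef :: "nat \<Rightarrow> (bool list \<Rightarrow> bool) \<Rightarrow> bool \<Rightarrow> nat \<Rightarrow> real" where
  "a_coef n g b i = Max {(walsh (n+1) (gb n g b) w)\<^sup>2 | w. w \<in> vecs (n+1) \<and> wt w = i}"

definition eps :: "nat \<Rightarrow> (bool list \<Rightarrow> bool) \<Rightarrow> bool \<Rightarrow> real" where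
  "eps n g b = (\<Sum>a\<in>{a \<in> vecs n. odd (wt a) \<noteq> b}. (walsh n g a)\<^sup>2)"

end

theory Submission
  imports Defs
begin

text \<open>For a balanced inner function \<open>h\<close> on \<open>l\<close> variables the Walsh spectrum of \<open>f \<diamond> h\<close>
  factorises over the blocks: \<open>W(f \<diamond> h)(\<alpha>\<^sub>1, ..., \<alpha>\<^sub>k) = W(f)(\<nu>) \<cdot> \<Prod>{W(h)(\<alpha>\<^sub>i) | \<alpha>\<^sub>i \<noteq> 0}\<close>,
  where \<open>\<nu>\<^sub>i = [\<alpha>\<^sub>i \<noteq> 0]\<close>: a zero block just counts the points of a fibre of \<open>h\<close>, which are
  \<open>2\<^sup>l / 2\<close> for either value of \<open>h\<close>, so it does not see the corresponding input of \<open>f\<close>. Weighting the squared spectrum by weight and using Parseval for \<open>h\<close>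
  gives \<open>Inf(f \<diamond> h) = Inf(h) Inf(f)\<close>; minimising \<open>-log W\<^sup>2\<close> block by block gives
  \<open>H(f \<diamond> h) = min\<^sub>i (-log a\<^sub>i(f) + i H(h))\<close>, the term for weight \<open>i\<close> being realised by
  placing one optimal spectral point of \<open>h\<close> in each block where \<open>\<nu>\<close> is one.

  Negating all inputs multiplies \<open>W(g)(\<alpha>)\<close> by \<open>(-1) ^ wt \<alpha>\<close>, so the spectrum of \<open>g\<^sub>b\<close> is that of \<open>g\<close>
  moved to the point \<open>(\<alpha>, b \<oplus> wt \<alpha> mod 2)\<close>. This gives \<open>Inf(g\<^sub>b) = Inf(g) + \<epsilon>\<^sub>b(g)\<close>, and for a
  plateaued \<open>t\<close>-resilient \<open>g\<close> with \<open>t \<equiv> b\<close> every term of the minimum is \<open>(i + 1) H(g)\<close> with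
  \<open>i \<ge> t + 2\<close>, equality coming from a spectral point of \<open>g\<close> of weight \<open>t + 1\<close>.\<close>

lemma finite_vecs [simp]: "finite (vecs n)"
  using finite_lists_length_eq[of "UNIV :: bool set" n] by (simp add: vecs_def)

lemma card_vecs: "card (vecs n) = 2 ^ n"
  using card_lists_length_eq[of "UNIV :: bool set" n] by (simp add: vecs_def)

lemma vecs_add: "vecs (m + n) = (\<lambda>(u, v). u @ v) ` (vecs m \<times> vecs n)"
proof -
  have "x \<in> (\<lambda>(u, v). u @ v) ` (vecs m \<times> vecs n)" if "length x = m + n" for x
    using that by (intro image_eqI[of _ _ "(take m x, drop m x)"]) (auto simp: vecs_def)
  then show ?thesis
    by (auto simp: vecs_def)
qed

lemma sum_vecs_append:
  "(\<Sum>x\<in>vecs (m + n). F x) = (\<Sum>u\<in>vecs m. \<Sum>v\<in>vecs n. (F (u @ v) :: 'a::comm_monoid_add))"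
proof -
  have "inj_on (\<lambda>(u, v). u @ v) (vecs m \<times> vecs n)"
    by (auto simp: inj_on_def vecs_def)
  then show ?thesis
    unfolding vecs_add by (subst sum.reindex) (auto simp: sum.cartesian_product case_prod_beta)
qed

lemma vecs_1: "vecs (Suc 0) = {[False], [True]}"
  by (auto simp: vecs_def length_Suc_conv)

lemma sum_vecs_Suc:
  "(\<Sum>x\<in>vecs (Suc n). F x) = (\<Sum>x\<in>vecs n. F (False # x)) + (\<Sum>x\<in>vecs n. (F (True # x) :: 'a::comm_monoid_add))"
  using sum_vecs_append[of F 1 n] by (simp add: vecs_1 sum.distrib)

lemma sum_vecs_snoc:
  "(\<Sum>x\<in>vecs (n + 1). F x) = (\<Sum>u\<in>vecs n. F (u @ [False]) + (F (u @ [True]) :: 'a::comm_monoid_add))"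
  using sum_vecs_append[of F n 1] by (simp add: vecs_1)

lemma sum_vecs_map_Not: "(\<Sum>y\<in>vecs n. F (map Not y)) = (\<Sum>y\<in>vecs n. F y)"
  by (rule sum.reindex_bij_witness[where i="map Not" and j="map Not"]) (auto simp: vecs_def comp_def)

lemma sgn01_xor: "sgn01 (a \<noteq> c) = sgn01 a * sgn01 c"
  by (simp add: sgn01_def)

lemma sgn01_eq_Not [simp]: "sgn01 (c = (\<not> d)) = sgn01 c * sgn01 d"
  by (simp add: sgn01_def)

lemma sgn01_sq [simp]: "sgn01 a * sgn01 a = 1"
  by (simp add: sgn01_def)

lemma sum_sgn01:
  assumes "finite A"
  shows "(\<Sum>x\<in>A. sgn01 (P x)) = real (card A) - 2 * real (card {x\<in>A. P x})"
proof -
  have "(\<Sum>x\<in>A. sgn01 (P x)) = (\<Sum>x\<in>A. 1 - 2 * (if P x then 1 else 0))"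
    by (rule sum.cong) (auto simp: sgn01_def)
  moreover have "(\<Sum>x\<in>A. if P x then 1 else 0) = real (card {x\<in>A. P x})"
    using sum.inter_filter[OF assms, of "\<lambda>_. 1 :: real" P] by simp
  ultimately show ?thesis
    by (simp add: sum_subtractf sum_distrib_left[symmetric])
qed

definition nonzero :: "bool list \<Rightarrow> bool" where
  "nonzero x \<longleftrightarrow> True \<in> set x"

lemma nonzero_iff: "x \<in> vecs n \<Longrightarrow> nonzero x \<longleftrightarrow> x \<noteq> replicate n False"
proof
  assume "x \<in> vecs n" "nonzero x"
  then show "x \<noteq> replicate n False"
    by (auto simp: nonzero_def)
next
  assume "x \<in> vecs n" "x \<noteq> replicate n False"
  then show "nonzero x"
    unfolding nonzero_def vecs_def by (metis (full_types) mem_Collect_eq replicate_eqI)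
qed

lemma wt_eq_0_iff: "wt x = 0 \<longleftrightarrow> \<not> nonzero x"
  by (simp add: wt_def nonzero_def count_list_0_iff)

lemma wt_Nil [simp]: "wt [] = 0"
  by (simp add: wt_def)

lemma wt_Cons [simp]: "wt (c # w) = (if c then 1 else 0) + wt w"
  by (simp add: wt_def)

lemma wt_append: "wt (u @ v) = wt u + wt v"
  by (simp add: wt_def)

lemma wt_replicate: "wt (replicate i c) = (if c then i else 0)"
  by (induction i) auto

lemma wt_le_length: "wt x \<le> length x"
  by (simp add: wt_def count_le_length)

lemma inner_Nil [simp]: "inner [] a = False" "inner x [] = False"
  by (auto simp: inner_def)

lemma inner_Cons [simp]: "inner (u # x) (v # a) = ((u \<and> v) \<noteq> inner x a)"
  by (auto simp: inner_def)

lemma inner_commute: "inner x a = inner a x"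
proof (induction x arbitrary: a)
  case (Cons u x a) then show ?case by (cases a) auto
qed simp

lemma inner_append: "length u = length a \<Longrightarrow> inner (u @ v) (a @ c) = (inner u a \<noteq> inner v c)"
proof (induction u arbitrary: a)
  case (Cons x u a) then show ?case by (cases a) auto
qed simp

lemma inner_zero: "\<not> nonzero a \<Longrightarrow> \<not> inner x a"
proof (induction x arbitrary: a)
  case (Cons u x a) then show ?case by (cases a) (auto simp: nonzero_def)
qed simp

lemma inner_map_Not: "length z = length a \<Longrightarrow> inner (map Not z) a = (inner z a \<noteq> odd (wt a))"
proof (induction z arbitrary: a)
  case (Cons u z a) then show ?case by (cases a) auto
qed simp

lemma sum_sgn01_inner: "(\<Sum>x\<in>vecs (length a). sgn01 (inner x a)) = (if nonzero a then 0 else 2 ^ length a)"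
proof (induction a)
  case Nil then show ?case by (simp add: vecs_def nonzero_def sgn01_def)
next
  case (Cons c a)
  have "(\<Sum>x\<in>vecs (length (c # a)). sgn01 (inner x (c # a))) = (1 + sgn01 c) * (\<Sum>y\<in>vecs (length a). sgn01 (inner y a))"
    by (simp add: sum_vecs_Suc sgn01_xor sum_distrib_left sum.distrib algebra_simps)
  with Cons.IH show ?case by (cases c) (auto simp: sgn01_def nonzero_def)
qed

definition vxor :: "bool list \<Rightarrow> bool list \<Rightarrow> bool list" where
  "vxor x y = map2 (\<noteq>) x y"

lemma vxor_Cons [simp]: "vxor (u # x) (v # y) = (u \<noteq> v) # vxor x y"
  by (simp add: vxor_def)

lemma length_vxor [simp]: "length (vxor x y) = min (length x) (length y)"
  by (simp add: vxor_def)

lemma vxor_in_vecs [simp]: "x \<in> vecs n \<Longrightarrow> y \<in> vecs n \<Longrightarrow> vxor x y \<in> vecs n"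
  by (simp add: vecs_def)

lemma vxor_zero: "length x = n \<Longrightarrow> vxor x (replicate n False) = x"
  by (induction x arbitrary: n) (auto simp: vxor_def)

lemma inner_vxor: "length x = length y \<Longrightarrow> inner (vxor x y) a = (inner x a \<noteq> inner y a)"
proof (induction x arbitrary: y a)
  case (Cons u x y a) then show ?case by (cases y; cases a) auto
qed (simp add: vxor_def)

lemma nonzero_vxor_vxor:
  "length y = length x \<Longrightarrow> length z = length x \<Longrightarrow> nonzero (vxor (vxor x y) z) \<longleftrightarrow> y \<noteq> vxor x z"
proof (induction x arbitrary: y z)
  case (Cons u x y z) then show ?case by (cases y; cases z) (auto simp: nonzero_def)
qed (simp add: nonzero_def vxor_def)

subsection \<open>The Walsh spectrum\<close>

lemma walsh_eq_sum: "walsh n f a = (\<Sum>x\<in>vecs n. sgn01 (f x) * sgn01 (inner x a)) / 2 ^ n"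
  by (simp add: walsh_def sgn01_xor)

lemma walsh_zero_if_balanced:
  assumes "balanced n f"
  shows "walsh n f (replicate n False) = 0"
proof -
  have "real (2 * card {x \<in> vecs n. f x}) = 2 ^ n"
    using assms unfolding balanced_def by simp
  then have "(\<Sum>x\<in>vecs n. sgn01 (f x)) = 0"
    by (simp add: sum_sgn01 card_vecs)
  then show ?thesis
    by (simp add: walsh_eq_sum inner_zero nonzero_def sgn01_def)
qed

lemma walsh_nonzero_imp_nonzero:
  "balanced n f \<Longrightarrow> a \<in> vecs n \<Longrightarrow> walsh n f a \<noteq> 0 \<Longrightarrow> nonzero a"
  using walsh_zero_if_balanced nonzero_iff by blast

lemma sum_sgn01_inner_vecs:
  "w \<in> vecs n \<Longrightarrow> (\<Sum>a\<in>vecs n. sgn01 (inner w a)) = (if nonzero w then 0 else 2 ^ n)"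
  using sum_sgn01_inner[of w] by (simp add: inner_commute vecs_def)

text \<open>Wiener--Khinchin: the power spectrum is the Walsh transform of the autocorrelation.\<close>
lemma sum_walsh_sq_sgn01_inner:
  assumes z: "z \<in> vecs n"
  shows "(\<Sum>a\<in>vecs n. (walsh n f a)\<^sup>2 * sgn01 (inner z a)) =
         (\<Sum>x\<in>vecs n. sgn01 (f x) * sgn01 (f (vxor x z))) / 2 ^ n"
proof -
  define s where "s x = sgn01 (f x)" for x
  define D where "D x y = (\<Sum>a\<in>vecs n. sgn01 (inner (vxor (vxor x y) z) a))" for x y
  have sq: "(walsh n f a)\<^sup>2 * sgn01 (inner z a) =
      (\<Sum>x\<in>vecs n. \<Sum>y\<in>vecs n. s x * s y * sgn01 (inner (vxor (vxor x y) z) a)) / 2 ^ n / 2 ^ n"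
    for a
  proof -
    have "(walsh n f a)\<^sup>2 * sgn01 (inner z a) =
        (\<Sum>x\<in>vecs n. s x * sgn01 (inner x a)) * (\<Sum>y\<in>vecs n. s y * sgn01 (inner y a)) * sgn01 (inner z a) / 2 ^ n / 2 ^ n"
      by (simp add: walsh_eq_sum power2_eq_square s_def)
    also have "\<dots> =
        (\<Sum>x\<in>vecs n. \<Sum>y\<in>vecs n. s x * s y * (sgn01 (inner x a) * sgn01 (inner y a) * sgn01 (inner z a))) / 2 ^ n / 2 ^ n"
      by (simp only: sum_product, simp only: sum_distrib_right) (simp add: mult_ac)
    also have "\<dots> = (\<Sum>x\<in>vecs n. \<Sum>y\<in>vecs n. s x * s y * sgn01 (inner (vxor (vxor x y) z) a)) / 2 ^ n / 2 ^ n"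
      using z by (intro arg_cong[where f="\<lambda>t. t / _ / _"] sum.cong refl)
        (auto simp: inner_vxor vecs_def sgn01_xor)
    finally show ?thesis .
  qed
  have D: "D x y = (if y = vxor x z then 2 ^ n else 0)" if "x \<in> vecs n" "y \<in> vecs n" for x y
  proof -
    have "D x y = (if nonzero (vxor (vxor x y) z) then 0 else 2 ^ n)"
      unfolding D_def using that z by (intro sum_sgn01_inner_vecs) (simp add: vecs_def)
    then show ?thesis
      using that z nonzero_vxor_vxor[of y x z] by (simp add: vecs_def)
  qed
  have swap: "(\<Sum>a\<in>vecs n. \<Sum>x\<in>vecs n. \<Sum>y\<in>vecs n. s x * s y * sgn01 (inner (vxor (vxor x y) z) a)) =
      (\<Sum>x\<in>vecs n. \<Sum>y\<in>vecs n. s x * s y * D x y)"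
    unfolding D_def sum_distrib_left by (subst sum.swap) (rule sum.cong[OF refl sum.swap])
  have "(\<Sum>a\<in>vecs n. (walsh n f a)\<^sup>2 * sgn01 (inner z a)) =
      (\<Sum>x\<in>vecs n. \<Sum>y\<in>vecs n. s x * s y * D x y) / 2 ^ n / 2 ^ n"
    by (simp add: sq sum_divide_distrib[symmetric] swap)
  also have "\<dots> = (\<Sum>x\<in>vecs n. s x * s (vxor x z) * 2 ^ n) / 2 ^ n / 2 ^ n"
  proof (intro arg_cong[where f="\<lambda>t. t / _ / _"] sum.cong refl)
    fix x assume x: "x \<in> vecs n"
    have "(\<Sum>y\<in>vecs n. s x * s y * D x y) = (\<Sum>y\<in>vecs n. if y = vxor x z then s x * s y * 2 ^ n else 0)"
      using x by (intro sum.cong) (simp_all add: D)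
    also have "\<dots> = s x * s (vxor x z) * 2 ^ n"
      using x z by (simp add: sum.delta)
    finally show "(\<Sum>y\<in>vecs n. s x * s y * D x y) = s x * s (vxor x z) * 2 ^ n" .
  qed
  finally show ?thesis
    by (simp add: s_def sum_distrib_right[symmetric])
qed

lemma parseval: "(\<Sum>a\<in>vecs n. (walsh n f a)\<^sup>2) = 1"
proof -
  have z: "replicate n False \<in> vecs n"
    by (simp add: vecs_def)
  have "(\<Sum>a\<in>vecs n. (walsh n f a)\<^sup>2) = (\<Sum>a\<in>vecs n. (walsh n f a)\<^sup>2 * sgn01 (inner (replicate n False) a))"
    by (simp add: inner_commute[of "replicate _ _"] inner_zero nonzero_def sgn01_def)
  also have "\<dots> = (\<Sum>x\<in>vecs n. 1) / 2 ^ n"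
    unfolding sum_walsh_sq_sgn01_inner[OF z] by (intro arg_cong[where f="\<lambda>t. t / _"] sum.cong) (auto simp: vxor_zero vecs_def)
  finally show ?thesis
    by (simp add: card_vecs)
qed

lemma exists_walsh_nonzero: "\<exists>a\<in>vecs n. walsh n f a \<noteq> 0"
proof (rule ccontr)
  assume "\<not> ?thesis"
  then have "(\<Sum>a\<in>vecs n. (walsh n f a)\<^sup>2) = 0"
    by simp
  then show False
    by (simp add: parseval)
qed

definition unit_vec :: "nat \<Rightarrow> nat \<Rightarrow> bool list" where
  "unit_vec n i = (replicate n False)[i := True]"

lemma flip_eq_vxor: "x \<in> vecs n \<Longrightarrow> i < n \<Longrightarrow> flip x i = vxor x (unit_vec n i)"
  by (rule nth_equalityI) (auto simp: flip_def vxor_def unit_vec_def vecs_def nth_list_update)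

lemma inner_unit_vec: "i < length a \<Longrightarrow> inner (unit_vec (length a) i) a = a ! i"
proof (induction a arbitrary: i)
  case (Cons c a i)
  then show ?case
    by (cases i) (simp_all add: unit_vec_def inner_commute[of "replicate _ _"] inner_zero nonzero_def)
qed simp

lemma card_flip_walsh:
  assumes "i < n"
  shows "real (card {x \<in> vecs n. f x \<noteq> f (flip x i)}) / 2 ^ n = (\<Sum>a\<in>vecs n. if a ! i then (walsh n f a)\<^sup>2 else 0)"
proof -
  define C where "C = real (card {x \<in> vecs n. f x \<noteq> f (flip x i)})"
  have e: "unit_vec n i \<in> vecs n"
    by (simp add: unit_vec_def vecs_def)
  have "(\<Sum>a\<in>vecs n. (walsh n f a)\<^sup>2 * sgn01 (a ! i)) = (\<Sum>a\<in>vecs n. (walsh n f a)\<^sup>2 * sgn01 (inner (unit_vec n i) a))"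
    using assms inner_unit_vec[of i] by (intro sum.cong) (auto simp: vecs_def)
  also have "\<dots> = (\<Sum>x\<in>vecs n. sgn01 (f x) * sgn01 (f (flip x i))) / 2 ^ n"
    using assms by (simp add: sum_walsh_sq_sgn01_inner[OF e] flip_eq_vxor cong: sum.cong)
  also have "\<dots> = 1 - 2 * C / 2 ^ n"
    unfolding sgn01_xor[symmetric] sum_sgn01[OF finite_vecs] C_def[symmetric]
    by (simp add: card_vecs diff_divide_distrib)
  finally have char: "(\<Sum>a\<in>vecs n. (walsh n f a)\<^sup>2 * sgn01 (a ! i)) = 1 - 2 * C / 2 ^ n" .
  have "(\<Sum>a\<in>vecs n. if a ! i then (walsh n f a)\<^sup>2 else 0) =
      (\<Sum>a\<in>vecs n. ((walsh n f a)\<^sup>2 - (walsh n f a)\<^sup>2 * sgn01 (a ! i)) / 2)"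
    by (rule sum.cong) (simp_all add: sgn01_def)
  also have "\<dots> = ((\<Sum>a\<in>vecs n. (walsh n f a)\<^sup>2) - (\<Sum>a\<in>vecs n. (walsh n f a)\<^sup>2 * sgn01 (a ! i))) / 2"
    by (simp add: sum_divide_distrib[symmetric] sum_subtractf)
  finally show ?thesis
    by (simp add: char parseval C_def)
qed

lemma influence_walsh: "influence n f = (\<Sum>a\<in>vecs n. real (wt a) * (walsh n f a)\<^sup>2)"
proof -
  have wt: "real (wt a) = (\<Sum>i<length a. if a ! i then 1 else 0)" for a
    by (induction a) (simp_all add: sum.lessThan_Suc_shift del: sum.lessThan_Suc)
  have "influence n f = (\<Sum>i<n. \<Sum>a\<in>vecs n. if a ! i then (walsh n f a)\<^sup>2 else 0)"
    unfolding influence_def by (intro sum.cong refl card_flip_walsh) simp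
  also have "\<dots> = (\<Sum>a\<in>vecs n. real (wt a) * (walsh n f a)\<^sup>2)"
    by (subst sum.swap) (auto simp: wt vecs_def sum_distrib_right intro!: sum.cong)
  finally show ?thesis .
qed

subsection \<open>The function \<open>g\<^sub>b\<close>\<close>

lemma walsh_gb:
  assumes a: "a \<in> vecs n"
  shows "walsh (Suc n) (gb n g b) (a @ [c]) = (if c = (b \<noteq> odd (wt a)) then walsh n g a else 0)"
proof -
  define S where "S = (\<Sum>y\<in>vecs n. sgn01 (g y) * sgn01 (inner y a))"
  have la: "length a = n"
    using a by (simp add: vecs_def)
  have "(\<Sum>y\<in>vecs n. sgn01 (g (map Not y)) * sgn01 (inner y a)) =
      (\<Sum>y\<in>vecs n. sgn01 (g y) * sgn01 (inner (map Not y) a))"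
    using sum_vecs_map_Not[of "\<lambda>y. sgn01 (g y) * sgn01 (inner (map Not y) a)" n] by (simp add: comp_def)
  also have "\<dots> = sgn01 (odd (wt a)) * S"
    unfolding S_def sum_distrib_left by (rule sum.cong) (auto simp: inner_map_Not vecs_def la sgn01_def)
  finally have flipped: "(\<Sum>y\<in>vecs n. sgn01 (g (map Not y)) * sgn01 (inner y a)) = sgn01 (odd (wt a)) * S" .
  have "(\<Sum>x\<in>vecs (n + 1). sgn01 (gb n g b x) * sgn01 (inner x (a @ [c]))) =
      (\<Sum>y\<in>vecs n. sgn01 (g y) * sgn01 (inner y a) + sgn01 b * sgn01 c * (sgn01 (g (map Not y)) * sgn01 (inner y a)))"
    unfolding sum_vecs_snoc
    by (rule sum.cong) (auto simp: gb_def vecs_def inner_append la sgn01_xor nth_append)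
  also have "\<dots> = S + sgn01 b * sgn01 c * (\<Sum>y\<in>vecs n. sgn01 (g (map Not y)) * sgn01 (inner y a))"
    by (simp add: sum.distrib sum_distrib_left S_def)
  also have "\<dots> = S * (1 + sgn01 b * sgn01 c * sgn01 (odd (wt a)))"
    by (simp only: flipped) (simp add: algebra_simps)
  finally have "walsh (Suc n) (gb n g b) (a @ [c]) = walsh n g a * ((1 + sgn01 b * sgn01 c * sgn01 (odd (wt a))) / 2)"
    by (simp add: walsh_eq_sum[of "Suc n"] walsh_eq_sum[of n] S_def)
  then show ?thesis
    by (cases b; cases c; cases "odd (wt a)") (simp_all add: sgn01_def)
qed

lemma influence_gb: "influence (n + 1) (gb n g b) = influence n g + eps n g b"
proof -
  have "influence (n + 1) (gb n g b) =
      (\<Sum>a\<in>vecs n. real (wt a) * (walsh n g a)\<^sup>2 + (if odd (wt a) \<noteq> b then (walsh n g a)\<^sup>2 else 0))"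
    unfolding influence_walsh sum_vecs_snoc
    by (rule sum.cong) (auto simp: walsh_gb wt_append algebra_simps)
  also have "\<dots> = influence n g + eps n g b"
    by (simp add: sum.distrib influence_walsh eps_def sum.inter_filter)
  finally show ?thesis .
qed

subsection \<open>Disjoint composition\<close>

definition block_lists :: "nat \<Rightarrow> nat \<Rightarrow> bool list list set" where
  "block_lists k l = {xs. set xs \<subseteq> vecs l \<and> length xs = k}"

lemma finite_block_lists [simp]: "finite (block_lists k l)"
  unfolding block_lists_def by (rule finite_lists_length_eq) simp

lemma block_lists_0 [simp]: "block_lists 0 l = {[]}"
  by (auto simp: block_lists_def)

lemma sum_block_lists_Suc:
  "(\<Sum>xs\<in>block_lists (Suc k) l. F xs) = (\<Sum>x\<in>vecs l. \<Sum>xs\<in>block_lists k l. (F (x # xs) :: 'a::comm_monoid_add))"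
proof -
  have "bij_betw (\<lambda>(x, xs). x # xs) (vecs l \<times> block_lists k l) (block_lists (Suc k) l)"
    by (rule bij_betwI') (auto simp: block_lists_def length_Suc_conv)
  then show ?thesis
    by (simp add: sum.reindex_bij_betw[symmetric] sum.cartesian_product case_prod_beta)
qed

lemma sum_vecs_mult: "(\<Sum>a\<in>vecs (k * l). F a) = (\<Sum>xs\<in>block_lists k l. (F (concat xs) :: 'a::comm_monoid_add))"
proof (induction k arbitrary: F)
  case 0 then show ?case by (simp add: vecs_def)
next
  case (Suc k F)
  then show ?case
    using sum_vecs_append[of F l "k * l"] by (simp add: sum_block_lists_Suc)
qed

lemma concat_in_vecs: "xs \<in> block_lists k l \<Longrightarrow> concat xs \<in> vecs (k * l)"
  by (induction xs arbitrary: k) (auto simp: block_lists_def vecs_def)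

lemma vecs_mult_eq_concat: "a \<in> vecs (k * l) \<Longrightarrow> \<exists>xs\<in>block_lists k l. a = concat xs"
proof (induction k arbitrary: a)
  case 0 then show ?case by (simp add: vecs_def)
next
  case (Suc k a)
  have "drop l a \<in> vecs (k * l)"
    using Suc.prems by (simp add: vecs_def)
  then obtain xs where "xs \<in> block_lists k l" "drop l a = concat xs"
    using Suc.IH by blast
  with Suc.prems append_take_drop_id[of l a] show ?case
    by (intro bexI[of _ "take l a # xs"]) (auto simp: block_lists_def vecs_def)
qed

lemma take_drop_concat:
  "set xs \<subseteq> vecs l \<Longrightarrow> i < length xs \<Longrightarrow> take l (drop (i * l) (concat xs)) = xs ! i"
proof (induction xs arbitrary: i)
  case (Cons x xs i)
  then have "length x = l"
    by (simp add: vecs_def)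
  with Cons show ?case
    by (cases i) (simp_all add: add.commute)
qed simp

lemma dcomp_concat: "xs \<in> block_lists k l \<Longrightarrow> dcomp k l f h (concat xs) = f (map h xs)"
  unfolding dcomp_def
  by (rule arg_cong[where f=f], rule nth_equalityI) (auto simp: block_lists_def take_drop_concat)

lemma sgn01_inner_concat:
  "xs \<in> block_lists k l \<Longrightarrow> as \<in> block_lists k l \<Longrightarrow>
   sgn01 (inner (concat xs) (concat as)) = prod_list (map2 (\<lambda>x a. sgn01 (inner x a)) xs as)"
proof (induction xs arbitrary: k as)
  case Nil then show ?case by (simp add: block_lists_def sgn01_def)
next
  case (Cons x xs k as)
  then obtain k' a as' where "k = Suc k'" "as = a # as'"
    by (cases k; cases as) (auto simp: block_lists_def)
  with Cons show ?case
    by (auto simp: block_lists_def vecs_def inner_append sgn01_xor)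
qed

definition fiber_char_sum :: "(bool list \<Rightarrow> bool) \<Rightarrow> nat \<Rightarrow> bool \<Rightarrow> bool list \<Rightarrow> real" where
  "fiber_char_sum h l c a = (\<Sum>x\<in>vecs l. if h x = c then sgn01 (inner x a) else 0)"

lemma sum_block_lists_fibers:
  "length as = k \<Longrightarrow>
   (\<Sum>xs\<in>block_lists k l. F (map h xs) * prod_list (map2 (\<lambda>x a. sgn01 (inner x a)) xs as)) =
   (\<Sum>y\<in>vecs k. F y * prod_list (map2 (fiber_char_sum h l) y as))"
proof (induction k arbitrary: F as)
  case 0 then show ?case by (simp add: vecs_def)
next
  case (Suc k F as)
  then obtain a as' where as: "as = a # as'" "length as' = k"
    by (cases as) auto
  define R where "R c = (\<Sum>y\<in>vecs k. F (c # y) * prod_list (map2 (fiber_char_sum h l) y as'))" for c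
  have "(\<Sum>xs\<in>block_lists (Suc k) l. F (map h xs) * prod_list (map2 (\<lambda>x a. sgn01 (inner x a)) xs as)) =
      (\<Sum>x\<in>vecs l. sgn01 (inner x a) *
        (\<Sum>xs\<in>block_lists k l. F (h x # map h xs) * prod_list (map2 (\<lambda>x a. sgn01 (inner x a)) xs as')))"
    by (simp add: sum_block_lists_Suc as sum_distrib_left mult_ac)
  also have "\<dots> = (\<Sum>x\<in>vecs l. sgn01 (inner x a) * R (h x))"
    unfolding R_def by (rule sum.cong[OF refl], rule arg_cong[where f="(*) _"], rule Suc.IH[OF as(2)])
  also have "\<dots> = (\<Sum>x\<in>vecs l. (if h x = False then sgn01 (inner x a) else 0) * R False +
      (if h x = True then sgn01 (inner x a) else 0) * R True)"
    by (rule sum.cong) auto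
  also have "\<dots> = fiber_char_sum h l False a * R False + fiber_char_sum h l True a * R True"
    by (simp add: fiber_char_sum_def sum.distrib sum_distrib_right)
  also have "\<dots> = (\<Sum>y\<in>vecs (Suc k). F y * prod_list (map2 (fiber_char_sum h l) y as))"
    by (simp add: R_def sum_vecs_Suc as sum_distrib_left mult_ac)
  finally show ?case .
qed

text \<open>The factor of one block in the spectrum of a composition: a zero block contributes \<open>1\<close>,
  not \<open>W(h)(0)\<close>, which vanishes for balanced \<open>h\<close>.\<close>
definition block_walsh :: "(bool list \<Rightarrow> bool) \<Rightarrow> nat \<Rightarrow> bool list \<Rightarrow> real" where
  "block_walsh h l a = (if nonzero a then walsh l h a else 1)"

lemma fiber_char_sum_balanced:
  assumes "balanced l h" "a \<in> vecs l"
  shows "fiber_char_sum h l c a = 2 ^ l / 2 * (sgn01 (c \<and> nonzero a) * block_walsh h l a)"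
proof -
  have "fiber_char_sum h l c a = (\<Sum>x\<in>vecs l. (sgn01 (inner x a) + sgn01 c * (sgn01 (h x) * sgn01 (inner x a))) / 2)"
    unfolding fiber_char_sum_def by (rule sum.cong) (auto simp: sgn01_def)
  also have "\<dots> = ((\<Sum>x\<in>vecs l. sgn01 (inner x a)) + sgn01 c * (2 ^ l * walsh l h a)) / 2"
    by (simp add: sum_divide_distrib[symmetric] sum.distrib sum_distrib_left[symmetric] walsh_eq_sum)
  also have "(\<Sum>x\<in>vecs l. sgn01 (inner x a)) = (if nonzero a then 0 else 2 ^ l)"
    using sum_sgn01_inner[of a] assms(2) by (simp add: vecs_def)
  finally show ?thesis
    using assms walsh_zero_if_balanced nonzero_iff
    by (cases "nonzero a") (auto simp: block_walsh_def sgn01_def)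
qed

lemma prod_fiber_char_sum:
  assumes "balanced l h"
  shows "as \<in> block_lists k l \<Longrightarrow> y \<in> vecs k \<Longrightarrow>
    prod_list (map2 (fiber_char_sum h l) y as) =
      (2 ^ l / 2) ^ k * (sgn01 (inner y (map nonzero as)) * prod_list (map (block_walsh h l) as))"
proof (induction as arbitrary: k y)
  case Nil then show ?case by (simp add: block_lists_def vecs_def sgn01_def)
next
  case (Cons a as k y)
  then obtain k' c y' where "k = Suc k'" "y = c # y'"
    by (cases k; cases y) (auto simp: block_lists_def vecs_def)
  with Cons show ?case
    by (auto simp: block_lists_def vecs_def fiber_char_sum_balanced[OF assms] sgn01_xor mult_ac)
qed

lemma walsh_dcomp:
  assumes "balanced l h" "as \<in> block_lists k l"
  shows "walsh (k * l) (dcomp k l f h) (concat as) = walsh k f (map nonzero as) * prod_list (map (block_walsh h l) as)"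
proof -
  define P where "P = prod_list (map (block_walsh h l) as)"
  have "(\<Sum>x\<in>vecs (k * l). sgn01 (dcomp k l f h x) * sgn01 (inner x (concat as))) =
      (\<Sum>xs\<in>block_lists k l. sgn01 (f (map h xs)) * prod_list (map2 (\<lambda>x a. sgn01 (inner x a)) xs as))"
    unfolding sum_vecs_mult using assms(2)
    by (intro sum.cong) (simp_all add: dcomp_concat sgn01_inner_concat)
  also have "\<dots> = (\<Sum>y\<in>vecs k. sgn01 (f y) * prod_list (map2 (fiber_char_sum h l) y as))"
    using assms(2) by (intro sum_block_lists_fibers) (simp add: block_lists_def)
  also have "\<dots> = (\<Sum>y\<in>vecs k. (2 ^ l / 2) ^ k * P * (sgn01 (f y) * sgn01 (inner y (map nonzero as))))"
    using prod_fiber_char_sum[OF assms] by (intro sum.cong) (simp_all add: P_def mult_ac)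
  also have "\<dots> = (2 ^ l / 2) ^ k * P * (2 ^ k * walsh k f (map nonzero as))"
    by (simp add: sum_distrib_left[symmetric] walsh_eq_sum)
  finally show ?thesis
    by (simp add: walsh_eq_sum[of "k * l"] P_def power_divide power_mult[symmetric] mult.commute[of l k] field_simps)
qed

lemma sum_block_walsh_sq:
  assumes "balanced l h"
  shows "(\<Sum>a\<in>vecs l. (block_walsh h l a)\<^sup>2 * R (nonzero a)) = R False + (R True :: real)"
proof -
  have z: "replicate l False \<in> vecs l"
    by (simp add: vecs_def)
  have "(\<Sum>a\<in>vecs l. (block_walsh h l a)\<^sup>2 * R (nonzero a)) =
      (\<Sum>a\<in>vecs l. (walsh l h a)\<^sup>2 * R True + (if a = replicate l False then R False else 0))"
    using assms walsh_zero_if_balanced nonzero_iff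
    by (intro sum.cong) (auto simp: block_walsh_def)
  also have "\<dots> = R True + R False"
    by (simp add: sum.distrib sum_distrib_right[symmetric] parseval z)
  finally show ?thesis
    by simp
qed

lemma sum_wt_block_walsh_sq:
  assumes "balanced l h"
  shows "(\<Sum>a\<in>vecs l. (block_walsh h l a)\<^sup>2 * real (wt a) * R (nonzero a)) = influence l h * (R True :: real)"
proof -
  have "(\<Sum>a\<in>vecs l. (block_walsh h l a)\<^sup>2 * real (wt a) * R (nonzero a)) =
      (\<Sum>a\<in>vecs l. real (wt a) * (walsh l h a)\<^sup>2 * R True)"
    by (intro sum.cong) (auto simp: block_walsh_def wt_eq_0_iff)
  then show ?thesis
    by (simp add: sum_distrib_right[symmetric] influence_walsh)
qed

lemma sum_block_lists_block_walsh_sq: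
  assumes "balanced l h"
  shows "(\<Sum>as\<in>block_lists k l. Q (map nonzero as) * prod_list (map (\<lambda>a. (block_walsh h l a)\<^sup>2) as)) =
    (\<Sum>w\<in>vecs k. (Q w :: real))"
proof (induction k arbitrary: Q)
  case 0 then show ?case by (simp add: vecs_def)
next
  case (Suc k Q)
  have "(\<Sum>as\<in>block_lists (Suc k) l. Q (map nonzero as) * prod_list (map (\<lambda>a. (block_walsh h l a)\<^sup>2) as)) =
      (\<Sum>a\<in>vecs l. (block_walsh h l a)\<^sup>2 *
        (\<Sum>as\<in>block_lists k l. Q (nonzero a # map nonzero as) * prod_list (map (\<lambda>a. (block_walsh h l a)\<^sup>2) as)))"
    by (simp add: sum_block_lists_Suc sum_distrib_left mult_ac)
  also have "\<dots> = (\<Sum>a\<in>vecs l. (block_walsh h l a)\<^sup>2 * (\<Sum>w\<in>vecs k. Q (nonzero a # w)))"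
    by (rule sum.cong[OF refl], rule arg_cong[where f="(*) _"], rule Suc.IH)
  also have "\<dots> = (\<Sum>w\<in>vecs k. Q (False # w)) + (\<Sum>w\<in>vecs k. Q (True # w))"
    by (rule sum_block_walsh_sq[OF assms, of "\<lambda>c. \<Sum>w\<in>vecs k. Q (c # w)"])
  finally show ?case
    by (simp add: sum_vecs_Suc)
qed

lemma sum_block_lists_wt_block_walsh_sq:
  assumes "balanced l h"
  shows "(\<Sum>as\<in>block_lists k l. real (sum_list (map wt as)) * Q (map nonzero as) * prod_list (map (\<lambda>a. (block_walsh h l a)\<^sup>2) as)) =
    influence l h * (\<Sum>w\<in>vecs k. real (wt w) * (Q w :: real))"
proof (induction k arbitrary: Q)
  case 0 then show ?case by (simp add: vecs_def)
next
  case (Suc k Q)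
  have "(\<Sum>as\<in>block_lists (Suc k) l. real (sum_list (map wt as)) * Q (map nonzero as) * prod_list (map (\<lambda>a. (block_walsh h l a)\<^sup>2) as)) =
      (\<Sum>a\<in>vecs l. (block_walsh h l a)\<^sup>2 * real (wt a) *
        (\<Sum>as\<in>block_lists k l. Q (nonzero a # map nonzero as) * prod_list (map (\<lambda>a. (block_walsh h l a)\<^sup>2) as))) +
      (\<Sum>a\<in>vecs l. (block_walsh h l a)\<^sup>2 *
        (\<Sum>as\<in>block_lists k l. real (sum_list (map wt as)) * Q (nonzero a # map nonzero as) * prod_list (map (\<lambda>a. (block_walsh h l a)\<^sup>2) as)))"
    by (simp add: sum_block_lists_Suc sum_distrib_left sum.distrib algebra_simps)
  also have "\<dots> = (\<Sum>a\<in>vecs l. (block_walsh h l a)\<^sup>2 * real (wt a) * (\<Sum>w\<in>vecs k. Q (nonzero a # w))) +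
      (\<Sum>a\<in>vecs l. (block_walsh h l a)\<^sup>2 * (influence l h * (\<Sum>w\<in>vecs k. real (wt w) * Q (nonzero a # w))))"
    by (rule arg_cong2[where f="(+)"];
        rule sum.cong[OF refl], rule arg_cong[where f="(*) _"],
        rule sum_block_lists_block_walsh_sq[OF assms] Suc.IH)
  also have "\<dots> = (\<Sum>a\<in>vecs l. (block_walsh h l a)\<^sup>2 * real (wt a) * (\<Sum>w\<in>vecs k. Q (nonzero a # w))) +
      influence l h * (\<Sum>a\<in>vecs l. (block_walsh h l a)\<^sup>2 * (\<Sum>w\<in>vecs k. real (wt w) * Q (nonzero a # w)))"
    by (simp add: sum_distrib_left mult_ac)
  also have "\<dots> = influence l h * (\<Sum>w\<in>vecs k. Q (True # w)) +
      influence l h * ((\<Sum>w\<in>vecs k. real (wt w) * Q (False # w)) + (\<Sum>w\<in>vecs k. real (wt w) * Q (True # w)))"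
    by (simp only: sum_wt_block_walsh_sq[OF assms, of "\<lambda>c. \<Sum>w\<in>vecs k. Q (c # w)"]
        sum_block_walsh_sq[OF assms, of "\<lambda>c. \<Sum>w\<in>vecs k. real (wt w) * Q (c # w)"])
  finally show ?case
    by (simp add: sum_vecs_Suc sum.distrib algebra_simps)
qed

lemma influence_dcomp:
  assumes "balanced l h"
  shows "influence (k * l) (dcomp k l f h) = influence l h * influence k f"
proof -
  have wt_concat: "wt (concat as) = sum_list (map wt as)" for as
    by (induction as) (simp_all add: wt_append)
  have "influence (k * l) (dcomp k l f h) =
      (\<Sum>as\<in>block_lists k l. real (sum_list (map wt as)) * (walsh k f (map nonzero as))\<^sup>2 *
        prod_list (map (\<lambda>a. (block_walsh h l a)\<^sup>2) as))"
    unfolding influence_walsh sum_vecs_mult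
    by (intro sum.cong) (simp_all add: walsh_dcomp[OF assms] wt_concat power_mult_distrib prod_list_power comp_def)
  also have "\<dots> = influence l h * (\<Sum>w\<in>vecs k. real (wt w) * (walsh k f w)\<^sup>2)"
    by (rule sum_block_lists_wt_block_walsh_sq[OF assms])
  also have "\<dots> = influence l h * influence k f"
    by (simp add: influence_walsh[of k f])
  finally show ?thesis .
qed

subsection \<open>Min-entropy\<close>

lemma min_entropy_eq:
  "min_entropy n f = Min {- log 2 ((walsh n f a)\<^sup>2) | a. a \<in> vecs n \<and> walsh n f a \<noteq> 0}"
  by (simp add: min_entropy_def log_recip)

lemma min_entropy_le:
  "a \<in> vecs n \<Longrightarrow> walsh n f a \<noteq> 0 \<Longrightarrow> min_entropy n f \<le> - log 2 ((walsh n f a)\<^sup>2)"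
  unfolding min_entropy_eq by (rule Min_le) auto

lemma min_entropy_attained:
  "\<exists>a\<in>vecs n. walsh n f a \<noteq> 0 \<and> min_entropy n f = - log 2 ((walsh n f a)\<^sup>2)"
proof -
  have "{- log 2 ((walsh n f a)\<^sup>2) | a. a \<in> vecs n \<and> walsh n f a \<noteq> 0} \<noteq> {}"
    using exists_walsh_nonzero[of n f] by blast
  from Min_in[OF _ this] show ?thesis
    unfolding min_entropy_eq by auto
qed

lemma walsh_sq_le_1: "a \<in> vecs n \<Longrightarrow> (walsh n f a)\<^sup>2 \<le> 1"
  using member_le_sum[of a "vecs n" "\<lambda>a. (walsh n f a)\<^sup>2"] by (simp add: parseval)

lemma min_entropy_nonneg: "0 \<le> min_entropy n f"
  using min_entropy_attained[of n f] walsh_sq_le_1[of _ n f] by force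

lemma min_entropy_plateaued:
  assumes "plateaued n f" "a \<in> vecs n" "walsh n f a \<noteq> 0"
  shows "min_entropy n f = - log 2 ((walsh n f a)\<^sup>2)"
proof -
  obtain c where c: "\<And>a. a \<in> vecs n \<Longrightarrow> walsh n f a \<in> {0, c, - c}"
    using assms(1) unfolding plateaued_def by blast
  obtain a' where a': "a' \<in> vecs n" "walsh n f a' \<noteq> 0" "min_entropy n f = - log 2 ((walsh n f a')\<^sup>2)"
    using min_entropy_attained by blast
  have "(walsh n f x)\<^sup>2 = c\<^sup>2" if "x \<in> vecs n" "walsh n f x \<noteq> 0" for x
    using c[OF that(1)] that(2) by auto
  with a' assms(2,3) show ?thesis
    by simp
qed

definition weight_max_walsh_sq :: "nat \<Rightarrow> (bool list \<Rightarrow> bool) \<Rightarrow> nat \<Rightarrow> real" where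
  "weight_max_walsh_sq k f i = Max {(walsh k f w)\<^sup>2 | w. w \<in> vecs k \<and> wt w = i}"

lemma walsh_sq_le_weight_max: "w \<in> vecs k \<Longrightarrow> (walsh k f w)\<^sup>2 \<le> weight_max_walsh_sq k f (wt w)"
  unfolding weight_max_walsh_sq_def by (rule Max_ge) auto

lemma weight_max_attained:
  assumes "i \<le> k"
  shows "\<exists>w\<in>vecs k. wt w = i \<and> weight_max_walsh_sq k f i = (walsh k f w)\<^sup>2"
proof -
  have "replicate i True @ replicate (k - i) False \<in> vecs k"
    using assms by (simp add: vecs_def)
  moreover have "wt (replicate i True @ replicate (k - i) False) = i"
    by (simp add: wt_append wt_replicate)
  ultimately have "{(walsh k f w)\<^sup>2 | w. w \<in> vecs k \<and> wt w = i} \<noteq> {}"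
    by blast
  from Max_in[OF _ this] show ?thesis
    unfolding weight_max_walsh_sq_def by auto
qed

lemma prod_block_walsh_bound:
  "set as \<subseteq> vecs l \<Longrightarrow> prod_list (map (block_walsh h l) as) \<noteq> 0 \<Longrightarrow>
   real (wt (map nonzero as)) * min_entropy l h \<le> - log 2 ((prod_list (map (block_walsh h l) as))\<^sup>2)"
proof (induction as)
  case (Cons a as)
  then have a: "block_walsh h l a \<noteq> 0" and IH: "real (wt (map nonzero as)) * min_entropy l h \<le>
      - log 2 ((prod_list (map (block_walsh h l) as))\<^sup>2)"
    by auto
  have "(if nonzero a then 1 else 0) * min_entropy l h \<le> - log 2 ((block_walsh h l a)\<^sup>2)"
    using a Cons.prems min_entropy_le[of a l h] by (auto simp: block_walsh_def)
  moreover have "- log 2 ((prod_list (map (block_walsh h l) (a # as)))\<^sup>2) =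
      - log 2 ((block_walsh h l a)\<^sup>2) - log 2 ((prod_list (map (block_walsh h l) as))\<^sup>2)"
    using Cons.prems by (simp add: power_mult_distrib log_mult_pos)
  moreover have "real (wt (map nonzero (a # as))) * min_entropy l h =
      (if nonzero a then 1 else 0) * min_entropy l h + real (wt (map nonzero as)) * min_entropy l h"
    by (simp add: algebra_simps)
  ultimately show ?case
    using IH by linarith
qed simp

lemma walsh_dcomp_spread:
  assumes "balanced l h" "s \<in> vecs l" "nonzero s" "w \<in> vecs k"
  defines "as \<equiv> map (\<lambda>c. if c then s else replicate l False) w"
  shows "as \<in> block_lists k l"
    and "walsh (k * l) (dcomp k l f h) (concat as) = walsh k f w * walsh l h s ^ wt w"
proof -
  show as: "as \<in> block_lists k l"
    using assms(2,4) by (auto simp: as_def block_lists_def vecs_def)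
  have "map nonzero (map (\<lambda>c. if c then s else replicate l False) v) = v \<and>
      prod_list (map (block_walsh h l) (map (\<lambda>c. if c then s else replicate l False) v)) = walsh l h s ^ wt v" for v
    using assms(3) by (induction v) (auto simp: block_walsh_def nonzero_def)
  then have "map nonzero as = w" "prod_list (map (block_walsh h l) as) = walsh l h s ^ wt w"
    by (simp_all add: as_def)
  with walsh_dcomp[OF assms(1) as] show "walsh (k * l) (dcomp k l f h) (concat as) = walsh k f w * walsh l h s ^ wt w"
    by simp
qed

lemma dcomp_entropy_term_le:
  assumes "balanced l h" "a \<in> vecs (k * l)" "walsh (k * l) (dcomp k l f h) a \<noteq> 0"
  shows "\<exists>i\<le>k. 0 < weight_max_walsh_sq k f i \<and>
    - log 2 (weight_max_walsh_sq k f i) + real i * min_entropy l h \<le> - log 2 ((walsh (k * l) (dcomp k l f h) a)\<^sup>2)"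
proof -
  obtain as where as: "as \<in> block_lists k l" "a = concat as"
    using vecs_mult_eq_concat assms(2) by blast
  define w where "w = map nonzero as"
  define P where "P = prod_list (map (block_walsh h l) as)"
  have w: "w \<in> vecs k"
    using as by (simp add: w_def vecs_def block_lists_def)
  have W: "walsh (k * l) (dcomp k l f h) a = walsh k f w * P"
    using walsh_dcomp[OF assms(1) as(1)] as(2) by (simp add: w_def P_def)
  with assms(3) have Wf: "walsh k f w \<noteq> 0" and P: "P \<noteq> 0"
    by auto
  have le: "(walsh k f w)\<^sup>2 \<le> weight_max_walsh_sq k f (wt w)"
    using walsh_sq_le_weight_max[OF w] .
  moreover have "0 < (walsh k f w)\<^sup>2"
    using Wf by simp
  ultimately have pos: "0 < weight_max_walsh_sq k f (wt w)"
    by linarith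
  have "real (wt w) * min_entropy l h \<le> - log 2 (P\<^sup>2)"
    using prod_block_walsh_bound[of as l h] as P by (simp add: w_def P_def block_lists_def)
  moreover have "log 2 ((walsh k f w)\<^sup>2) \<le> log 2 (weight_max_walsh_sq k f (wt w))"
    using le Wf pos by simp
  moreover have "- log 2 ((walsh (k * l) (dcomp k l f h) a)\<^sup>2) = - log 2 ((walsh k f w)\<^sup>2) - log 2 (P\<^sup>2)"
    using W Wf P by (simp add: power_mult_distrib log_mult_pos)
  ultimately have "- log 2 (weight_max_walsh_sq k f (wt w)) + real (wt w) * min_entropy l h \<le>
      - log 2 ((walsh (k * l) (dcomp k l f h) a)\<^sup>2)"
    by linarith
  moreover have "wt w \<le> k"
    using w wt_le_length[of w] by (simp add: vecs_def)
  ultimately show ?thesis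
    using pos by blast
qed

lemma dcomp_entropy_term_attained:
  assumes "balanced l h" "i \<le> k" "0 < weight_max_walsh_sq k f i"
  shows "\<exists>a\<in>vecs (k * l). walsh (k * l) (dcomp k l f h) a \<noteq> 0 \<and>
    - log 2 ((walsh (k * l) (dcomp k l f h) a)\<^sup>2) = - log 2 (weight_max_walsh_sq k f i) + real i * min_entropy l h"
proof -
  obtain s where s: "s \<in> vecs l" "walsh l h s \<noteq> 0" "min_entropy l h = - log 2 ((walsh l h s)\<^sup>2)"
    using min_entropy_attained by blast
  obtain w where w: "w \<in> vecs k" "wt w = i" "weight_max_walsh_sq k f i = (walsh k f w)\<^sup>2"
    using weight_max_attained[OF assms(2)] by blast
  define as where "as = map (\<lambda>c. if c then s else replicate l False) w"
  have nz: "nonzero s"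
    using walsh_nonzero_imp_nonzero[OF assms(1) s(1,2)] .
  have sq: "(walsh (k * l) (dcomp k l f h) (concat as))\<^sup>2 = weight_max_walsh_sq k f i * ((walsh l h s)\<^sup>2) ^ i"
    using walsh_dcomp_spread(2)[OF assms(1) s(1) nz w(1)] w by (simp add: as_def power_mult_distrib flip: power_mult mult.commute)
  show ?thesis
  proof (intro bexI conjI)
    show "concat as \<in> vecs (k * l)"
      using walsh_dcomp_spread(1)[OF assms(1) s(1) nz w(1)] concat_in_vecs by (simp add: as_def)
    have "0 < (walsh (k * l) (dcomp k l f h) (concat as))\<^sup>2"
      unfolding sq using assms(3) s(2) by simp
    then show "walsh (k * l) (dcomp k l f h) (concat as) \<noteq> 0"
      by auto
    show "- log 2 ((walsh (k * l) (dcomp k l f h) (concat as))\<^sup>2) = - log 2 (weight_max_walsh_sq k f i) + real i * min_entropy l h"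
      unfolding sq s(3) using assms(3) s(2) by (simp add: log_mult_pos log_nat_power)
  qed
qed

theorem min_entropy_dcomp:
  assumes "balanced l h"
  shows "min_entropy (k * l) (dcomp k l f h) =
    Min {- log 2 (weight_max_walsh_sq k f i) + real i * min_entropy l h | i. i \<in> {0..k} \<and> 0 < weight_max_walsh_sq k f i}"
    (is "?H = Min ?T")
proof (rule order.antisym)
  have fin: "finite ?T"
    by (rule finite_image_set) simp
  obtain a where a: "a \<in> vecs (k * l)" "walsh (k * l) (dcomp k l f h) a \<noteq> 0"
    "?H = - log 2 ((walsh (k * l) (dcomp k l f h) a)\<^sup>2)"
    using min_entropy_attained by blast
  from dcomp_entropy_term_le[OF assms a(1,2)] obtain i where i: "i \<le> k" "0 < weight_max_walsh_sq k f i"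
    "- log 2 (weight_max_walsh_sq k f i) + real i * min_entropy l h \<le> ?H"
    unfolding a(3) by blast
  then have T: "- log 2 (weight_max_walsh_sq k f i) + real i * min_entropy l h \<in> ?T"
    by auto
  with i(3) show "Min ?T \<le> ?H"
    using Min_le[OF fin] order.trans by blast
  from Min_in[OF fin] T obtain j where j: "j \<le> k" "0 < weight_max_walsh_sq k f j"
    "Min ?T = - log 2 (weight_max_walsh_sq k f j) + real j * min_entropy l h"
    by auto
  from dcomp_entropy_term_attained[OF assms j(1,2)] obtain b where
    "b \<in> vecs (k * l)" "walsh (k * l) (dcomp k l f h) b \<noteq> 0"
    "- log 2 ((walsh (k * l) (dcomp k l f h) b)\<^sup>2) = Min ?T"
    unfolding j(3) by blast
  then show "?H \<le> Min ?T"
    using min_entropy_le by metis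
qed

subsection \<open>Specialisation to \<open>g\<^sub>b \<diamond> g\<close>\<close>

lemma vecs_Suc_snoc: "w \<in> vecs (Suc n) \<Longrightarrow> \<exists>a c. w = a @ [c] \<and> a \<in> vecs n"
  by (cases w rule: rev_cases) (auto simp: vecs_def)

lemma weight_max_gb_witness:
  assumes "i \<le> Suc n" "0 < weight_max_walsh_sq (Suc n) (gb n g b) i"
  obtains a where "a \<in> vecs n" "walsh n g a \<noteq> 0"
    "weight_max_walsh_sq (Suc n) (gb n g b) i = (walsh n g a)\<^sup>2"
    "i = wt a + (if b \<noteq> odd (wt a) then 1 else 0)"
proof -
  obtain w where w: "w \<in> vecs (Suc n)" "wt w = i" "weight_max_walsh_sq (Suc n) (gb n g b) i = (walsh (Suc n) (gb n g b) w)\<^sup>2"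
    using weight_max_attained[OF assms(1)] by blast
  then obtain a c where a: "w = a @ [c]" "a \<in> vecs n"
    using vecs_Suc_snoc by blast
  with w assms(2) walsh_gb[OF a(2), of g b c] have "c = (b \<noteq> odd (wt a))" "walsh n g a \<noteq> 0"
    "weight_max_walsh_sq (Suc n) (gb n g b) i = (walsh n g a)\<^sup>2"
    by (auto split: if_splits)
  with that a w show ?thesis
    by (auto simp: wt_append)
qed

lemma walsh_sq_le_weight_max_gb:
  "a \<in> vecs n \<Longrightarrow> (walsh n g a)\<^sup>2 \<le> weight_max_walsh_sq (Suc n) (gb n g b) (wt a + (if b \<noteq> odd (wt a) then 1 else 0))"
  using walsh_sq_le_weight_max[of "a @ [b \<noteq> odd (wt a)]" "Suc n" "gb n g b"]
  by (simp add: walsh_gb wt_append vecs_def)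

lemma log_weight_max_gb_plateaued:
  assumes "plateaued n g" "i \<le> Suc n" "0 < weight_max_walsh_sq (Suc n) (gb n g b) i"
  shows "- log 2 (weight_max_walsh_sq (Suc n) (gb n g b) i) = min_entropy n g"
  using weight_max_gb_witness[OF assms(2,3)] min_entropy_plateaued[OF assms(1)] by metis

lemma min_entropy_terms_gb_plateaued:
  assumes "t < n" "odd t = b" "plateaued n g" "resilient n g t" "\<not> resilient n g (t + 1)"
  shows "Min {- log 2 (weight_max_walsh_sq (Suc n) (gb n g b) i) + real i * min_entropy n g | i.
      i \<in> {0..Suc n} \<and> 0 < weight_max_walsh_sq (Suc n) (gb n g b) i} = (real t + 3) * min_entropy n g"
    (is "Min ?T = _")
proof (rule Min_eqI)
  show "finite ?T"
    by (rule finite_image_set) simp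
next
  fix y assume "y \<in> ?T"
  then obtain i where i: "i \<le> Suc n" "0 < weight_max_walsh_sq (Suc n) (gb n g b) i"
    "y = - log 2 (weight_max_walsh_sq (Suc n) (gb n g b) i) + real i * min_entropy n g"
    by auto
  obtain a where a: "a \<in> vecs n" "walsh n g a \<noteq> 0" "i = wt a + (if b \<noteq> odd (wt a) then 1 else 0)"
    using weight_max_gb_witness[OF i(1,2)] by metis
  have "t + 1 \<le> wt a"
    using assms(4) a(1,2) unfolding resilient_def by (cases "wt a \<le> t") auto
  moreover have "wt a = t + 1 \<Longrightarrow> b \<noteq> odd (wt a)"
    using assms(2) by auto
  ultimately have "t + 2 \<le> i"
    using a(3) by (cases "wt a = t + 1") auto
  then have "(real t + 2) * min_entropy n g \<le> real i * min_entropy n g"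
    using min_entropy_nonneg[of n g] by (intro mult_right_mono) auto
  then show "(real t + 3) * min_entropy n g \<le> y"
    using i log_weight_max_gb_plateaued[OF assms(3) i(1,2)] by (simp add: algebra_simps)
next
  obtain a where a: "a \<in> vecs n" "wt a \<le> t + 1" "walsh n g a \<noteq> 0"
    using assms(5) unfolding resilient_def by blast
  with assms(4) have wt: "wt a = t + 1"
    unfolding resilient_def by (cases "wt a \<le> t") auto
  then have "(walsh n g a)\<^sup>2 \<le> weight_max_walsh_sq (Suc n) (gb n g b) (t + 2)"
    using walsh_sq_le_weight_max_gb[OF a(1), where b=b] assms(2) by simp
  moreover have "0 < (walsh n g a)\<^sup>2"
    using a(3) by simp
  ultimately have pos: "0 < weight_max_walsh_sq (Suc n) (gb n g b) (t + 2)"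
    by linarith
  have "t + 2 \<le> Suc n"
    using assms(1) by simp
  with pos have mem: "- log 2 (weight_max_walsh_sq (Suc n) (gb n g b) (t + 2)) + real (t + 2) * min_entropy n g \<in> ?T"
    by (intro CollectI exI[of _ "t + 2"]) simp
  have "- log 2 (weight_max_walsh_sq (Suc n) (gb n g b) (t + 2)) + real (t + 2) * min_entropy n g =
      (real t + 3) * min_entropy n g"
    using log_weight_max_gb_plateaued[OF assms(3) \<open>t + 2 \<le> Suc n\<close> pos] by (simp add: algebra_simps)
  with mem show "(real t + 3) * min_entropy n g \<in> ?T"
    by simp
qed

theorem theorem6:
  fixes n :: nat and g :: "bool list \<Rightarrow> bool" and b :: bool
  assumes "balanced n g"
  defines "G \<equiv> dcomp (n+1) n (gb n g b) g"
  shows "min_entropy (n*(n+1)) G / influence (n*(n+1)) G =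
           Min {- log 2 (a_coef n g b i) + real i * min_entropy n g | i. i \<in> {0..n+1} \<and> a_coef n g b i > 0}
           / (influence n g * (influence n g + eps n g b))
     \<and> (\<forall>t::nat. t < n \<and> odd t = b \<and> plateaued n g \<and> resilient n g t \<and> \<not> resilient n g (t+1)
         \<longrightarrow> min_entropy (n*(n+1)) G / influence (n*(n+1)) G =
             min_entropy n g / influence n g * ((real t + 3) / (influence n g + eps n g b)))"
proof -
  have a_coef: "a_coef n g b = weight_max_walsh_sq (Suc n) (gb n g b)"
    by (simp add: fun_eq_iff a_coef_def weight_max_walsh_sq_def)
  have infl: "influence (n * (n + 1)) G = influence n g * (influence n g + eps n g b)"
    using influence_dcomp[OF assms(1), of "n + 1" "gb n g b"] influence_gb[of n g b]
    by (simp add: G_def mult.commute)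
  have ent: "min_entropy (n * (n + 1)) G =
      Min {- log 2 (a_coef n g b i) + real i * min_entropy n g | i. i \<in> {0..n+1} \<and> a_coef n g b i > 0}"
    using min_entropy_dcomp[OF assms(1), of "n + 1" "gb n g b"] by (simp add: G_def a_coef mult.commute)
  have "Min {- log 2 (a_coef n g b i) + real i * min_entropy n g | i. i \<in> {0..n+1} \<and> a_coef n g b i > 0} =
      (real t + 3) * min_entropy n g"
    if "t < n \<and> odd t = b \<and> plateaued n g \<and> resilient n g t \<and> \<not> resilient n g (t + 1)" for t
    using that min_entropy_terms_gb_plateaued[of t n b g] by (simp add: a_coef)
  then show ?thesis
    unfolding infl ent by (simp add: times_divide_times_eq mult.commute)
qed

end
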